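(* For sufficiently large $m$, let $G=\mathbb{Z}_2^m\times\mathbb{Z}_4$. Let $t$ be an integer with $3\leq t\leq 0.001f(G)$ and $|I(G)|+2t\equiv 0\pmod 3$, and let $M$ be the multiset consisting of $f(G)-t$ copies of $2$ and $\frac13(|I(G)|+2t)$ copies of $3$. Then $G\setminus\{0\}$ has a zero-sum $M$-partition.
   Context: $I(G)$ is the set of elements of order $2$ in $G$, and $f(G)=(|G|-|I(G)|-1)/2$. A zero-sum $M$-partition of a set $S\subseteq G$ is a partition of $S$ into sets each summing to $0$, such that the multiset of part sizes equals $M$. *)

theory Defs
  imports Complex_Main "HOL-Library.Function_Algebras" "HOL-Library.Product_Plus"
    "HOL-Library.Numeral_Type" "HOL-Library.Disjoint_Sets" "HOL-Library.Multiset"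
begin

text \<open>The group Z_2^m \<times> Z_4 is realised as the subgroup of elements whose first
  component vanishes outside the coordinates 0..m-1.\<close>

type_synonym elt = "(nat \<Rightarrow> 2) \<times> 4"

definition Gm :: "nat \<Rightarrow> elt set" where
  "Gm m = {(v, a). \<forall>i\<ge>m. v i = 0}"

definition I_set :: "'a::monoid_add set \<Rightarrow> 'a set" where
  "I_set G = {g \<in> G. g \<noteq> 0 \<and> g + g = 0}"

text \<open>f(G) = (|G| - |I(G)| - 1)/2 (always an integer for groups of even order).\<close>
definition f_val :: "'a::monoid_add set \<Rightarrow> nat" where
  "f_val G = (card G - card (I_set G) - 1) div 2"

definition zero_sum_partition :: "'a::comm_monoid_add set \<Rightarrow> nat multiset \<Rightarrow> bool" where
  "zero_sum_partition S M \<longleftrightarrow>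
     (\<exists>P. partition_on S P \<and> finite P \<and> (\<forall>X\<in>P. sum id X = 0)
          \<and> image_mset card (mset_set P) = M)"

end

theory Submission
  imports Defs "HOL-Library.FuncSet"
begin

(* The elements of order at most 2 form a copy of F_2^(m+1), and the elements of order 4 fall
   into the 2^m zero-sum pairs {(v,1), (v,3)}. If sigma is an orthomorphism of a subgroup L of
   an elementary abelian 2-group (sigma and x |-> x + sigma x are both bijections of L), and
   a, b are independent modulo L, then the triples {x + a, sigma x + b, x + sigma x + a + b},
   x in L, partition (L + <a, b>) - L. Iterating this over F_2^r < F_2^(r+2) < ... < F_2^(m+1)
   splits everything but F_2^r into zero-sum triples, where r = 0 for odd m and r = 3 for
   even m; in the latter case the seven nonzero vectors of F_2^3 are absorbed together with
   four pairs into five triples. Finally, a triple {(q1,0), (q2,0), (q3,0)} together with the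
   pairs of q1, q2, q3 can be regrouped into three triples, which trades three pairs for two
   more triples; the lower layers contain about 2^m / 6 such triples, far more than the t / 3
   needed. *)

section \<open>Partitions into zero-sum blocks\<close>

lemma partition_on_Un:
  assumes "partition_on A P" "partition_on B Q" "A \<inter> B = {}"
  shows "partition_on (A \<union> B) (P \<union> Q)"
  using assms by (auto simp: partition_on_def intro: disjoint_union)

lemma partition_on_Diff:
  assumes "partition_on S P" "R \<subseteq> P"
  shows "partition_on (S - \<Union>R) (P - R)"
  using assms diff_Union_pairwise_disjoint[of P R]
  by (auto simp: partition_on_def intro: pairwise_subset)

lemma partition_on_replace:
  assumes "partition_on S P" "R \<subseteq> P" "partition_on (\<Union>R) R'"
  shows "partition_on S ((P - R) \<union> R')"
proof -
  have "partition_on ((S - \<Union>R) \<union> \<Union>R) ((P - R) \<union> R')"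
    using assms by (intro partition_on_Un partition_on_Diff) auto
  moreover have "(S - \<Union>R) \<union> \<Union>R = S"
    using assms(1,2) by (auto simp: partition_on_def)
  ultimately show ?thesis by simp
qed

lemma partition_on_telescope:
  assumes "\<And>j. L j \<subseteq> L (Suc j)"
    and "\<And>j. j < N \<Longrightarrow> partition_on (L (Suc j) - L j) (P j)"
  shows "partition_on (L N - L 0) (\<Union>j<N. P j)"
  using assms
proof (induction N)
  case 0
  then show ?case by (simp add: partition_on_empty)
next
  case (Suc N)
  have "L 0 \<subseteq> L N"
    using Suc.prems(1) by (simp add: lift_Suc_mono_le)
  then have "L (Suc N) - L 0 = (L N - L 0) \<union> (L (Suc N) - L N)"
    using Suc.prems(1) by auto
  moreover have "(\<Union>j<Suc N. P j) = (\<Union>j<N. P j) \<union> P N"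
    by (simp add: lessThan_Suc Un_commute)
  ultimately show ?case
    using Suc by (simp add: partition_on_Un Diff_Int_distrib2 Int_Diff)
qed

definition zero_sum_blocks :: "nat set \<Rightarrow> 'a::comm_monoid_add set set \<Rightarrow> bool" where
  "zero_sum_blocks K P \<longleftrightarrow> (\<forall>X\<in>P. card X \<in> K \<and> sum id X = 0)"

abbreviation pair_blocks :: "'a set set \<Rightarrow> 'a set set" where
  "pair_blocks P \<equiv> {X \<in> P. card X = 2}"

lemma zero_sum_blocks_Un [simp]:
  "zero_sum_blocks K (P \<union> Q) \<longleftrightarrow> zero_sum_blocks K P \<and> zero_sum_blocks K Q"
  by (auto simp: zero_sum_blocks_def)

lemma zero_sum_blocks_mono:
  "zero_sum_blocks K P \<Longrightarrow> Q \<subseteq> P \<Longrightarrow> K \<subseteq> K' \<Longrightarrow> zero_sum_blocks K' Q"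
  by (auto simp: zero_sum_blocks_def)

lemma card_partition_triples:
  assumes "finite S" "partition_on S P" "zero_sum_blocks {3} P"
  shows "card S = 3 * card P"
proof -
  have "card S = (\<Sum>X\<in>P. card X)"
    using assms(1,2) by (intro product_partition) (auto simp: partition_on_def intro: finite_subset)
  also have "\<dots> = 3 * card P"
    using assms(3) by (simp add: zero_sum_blocks_def)
  finally show ?thesis .
qed

lemma partition_on_zero_sum_image:
  fixes f :: "'a::comm_monoid_add \<Rightarrow> 'b::comm_monoid_add"
  assumes f: "inj f" "\<And>x y. f (x + y) = f x + f y" "f 0 = 0"
    and P: "partition_on S P" "zero_sum_blocks K P"
  shows "partition_on (f ` S) ((`) f ` P)" "zero_sum_blocks K ((`) f ` P)"
proof -
  have "{} \<notin> (`) f ` P" using P(1) by (auto simp: partition_on_def)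
  then show "partition_on (f ` S) ((`) f ` P)"
    using partition_on_inj_image[OF P(1) inj_on_subset[OF f(1)]] by simp
  have "sum id (f ` X) = f (sum id X)" for X
    using sum.reindex[OF inj_on_subset[OF f(1)], of X id] sum_comp_morphism[of f id X] f(2,3)
    by simp
  then show "zero_sum_blocks K ((`) f ` P)"
    using P(2) f(1,3) by (auto simp: zero_sum_blocks_def card_image inj_on_subset)
qed

lemma zero_sum_partition_of_blocks:
  fixes S :: "'a::comm_monoid_add set"
  assumes fin: "finite S" and P: "partition_on S P" "zero_sum_blocks {2, 3} P"
    and pq: "2 * card (pair_blocks P) + 3 * q = card S"
  shows "zero_sum_partition S (replicate_mset (card (pair_blocks P)) 2 + replicate_mset q 3)"
proof -
  define P3 where "P3 = {X \<in> P. card X = 3}"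
  have finP: "finite P" using fin P(1) by (rule finite_elements)
  have split: "P = pair_blocks P \<union> P3" "pair_blocks P \<inter> P3 = {}"
    using P(2) by (auto simp: P3_def zero_sum_blocks_def)
  have "card S = (\<Sum>X\<in>P. card X)"
    using fin P(1) by (intro product_partition) (auto simp: partition_on_def intro: finite_subset)
  also have "\<dots> = (\<Sum>X\<in>pair_blocks P. card X) + (\<Sum>X\<in>P3. card X)"
    using finP split by (metis (no_types, lifting) finite_Un sum.union_disjoint)
  also have "\<dots> = 2 * card (pair_blocks P) + 3 * card P3"
    by (simp add: P3_def)
  finally have "card P3 = q" using pq by simp
  have "image_mset card (mset_set P)
      = image_mset card (mset_set (pair_blocks P)) + image_mset card (mset_set P3)"
    using finP split by (metis (no_types, lifting) finite_Un image_mset_union mset_set_Union)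
  also have "image_mset card (mset_set (pair_blocks P)) = image_mset (\<lambda>_. 2) (mset_set (pair_blocks P))"
    by (rule image_mset_cong) (use finP in auto)
  also have "image_mset card (mset_set P3) = image_mset (\<lambda>_. 3) (mset_set P3)"
    by (rule image_mset_cong) (use finP in \<open>auto simp: P3_def\<close>)
  finally have "image_mset card (mset_set P) = replicate_mset (card (pair_blocks P)) 2 + replicate_mset q 3"
    using \<open>card P3 = q\<close> by (simp add: image_mset_const_eq)
  then show ?thesis
    using P finP unfolding zero_sum_partition_def zero_sum_blocks_def by blast
qed

section \<open>Zero-sum triples from an orthomorphism\<close>

definition orthomorphism_on :: "'a::plus set \<Rightarrow> ('a \<Rightarrow> 'a) \<Rightarrow> bool" where
  "orthomorphism_on L \<sigma> \<longleftrightarrow> bij_betw \<sigma> L L \<and> bij_betw (\<lambda>x. x + \<sigma> x) L L"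

definition ext_triple :: "('a::plus \<Rightarrow> 'a) \<Rightarrow> 'a \<Rightarrow> 'a \<Rightarrow> 'a \<Rightarrow> 'a set" where
  "ext_triple \<sigma> a b x = {x + a, \<sigma> x + b, x + \<sigma> x + (a + b)}"

context
  fixes L :: "'a::ab_group_add set" and a b :: 'a and \<sigma> :: "'a \<Rightarrow> 'a"
  assumes add_self: "\<And>x::'a. x + x = 0"
    and add_closed: "\<And>x y. x \<in> L \<Longrightarrow> y \<in> L \<Longrightarrow> x + y \<in> L"
    and a_notin: "a \<notin> L" and b_notin: "b \<notin> L" and ab_notin: "a + b \<notin> L"
    and orth: "orthomorphism_on L \<sigma>"
begin

lemma add_self_left: "x + (x + y) = (y::'a)"
  by (simp add: add.assoc[symmetric] add_self)

lemma ext_coset_eq_iff: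
  assumes x: "x \<in> L" and y: "y \<in> L" and c: "c \<in> {a, b, a + b}" and d: "d \<in> {a, b, a + b}"
  shows "x + c = y + d \<longleftrightarrow> c = d \<and> x = y"
proof
  assume eq: "x + c = y + d"
  have "c + d = (x + c) + (x + d)"
    by (simp add: ac_simps add_self add_self_left)
  also have "\<dots> = x + y"
    unfolding eq by (simp add: ac_simps add_self add_self_left)
  finally have "c + d \<in> L" using add_closed x y by simp
  moreover have "c + d \<in> {a, b, a + b}" if "c \<noteq> d"
    using c d that by (auto simp: ac_simps add_self add_self_left)
  ultimately have "c = d" using a_notin b_notin ab_notin by fastforce
  then show "c = d \<and> x = y" using eq by simp
qed simp

lemma orthomorphism_on_mem:
  assumes "x \<in> L" shows "\<sigma> x \<in> L" "x + \<sigma> x \<in> L"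
  using orth assms by (auto simp: orthomorphism_on_def bij_betw_def)

lemma ext_shifts_distinct:
  assumes "x \<in> L" shows "a \<noteq> b" "a \<noteq> a + b" "b \<noteq> a + b"
proof -
  have "0 \<in> L" using add_closed[OF assms assms] by (simp add: add_self)
  then show "a \<noteq> b" "a \<noteq> a + b" "b \<noteq> a + b"
    using a_notin b_notin ab_notin by (auto simp: add_self)
qed

lemma ext_triple_card: "x \<in> L \<Longrightarrow> card (ext_triple \<sigma> a b x) = 3"
  using ext_shifts_distinct[of x]
  by (simp add: ext_triple_def orthomorphism_on_mem ext_coset_eq_iff)

lemma ext_triple_sum:
  assumes x: "x \<in> L" shows "sum id (ext_triple \<sigma> a b x) = 0"
proof -
  have "sum id (ext_triple \<sigma> a b x) = (x + a) + ((\<sigma> x + b) + (x + \<sigma> x + (a + b)))"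
    using ext_shifts_distinct[OF x] by (simp add: ext_triple_def orthomorphism_on_mem x ext_coset_eq_iff)
  also have "\<dots> = 0"
    by (simp add: ac_simps add_self add_self_left)
  finally show ?thesis .
qed

lemma ext_triple_disjoint:
  assumes x: "x \<in> L" and y: "y \<in> L"
    and z: "z \<in> ext_triple \<sigma> a b x" "z \<in> ext_triple \<sigma> a b y"
  shows "x = y"
proof -
  \<comment> \<open>\<open>\<pi> c v\<close> is the element of \<open>L\<close> that \<open>ext_triple \<sigma> a b v\<close> places in the coset \<open>c + L\<close>\<close>
  define \<pi> where "\<pi> c v = (if c = a then v else if c = b then \<sigma> v else v + \<sigma> v)" for c v
  have triple: "ext_triple \<sigma> a b v = (\<lambda>c. \<pi> c v + c) ` {a, b, a + b}" for v
    using ext_shifts_distinct[OF x] by (auto simp: ext_triple_def \<pi>_def)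
  have \<pi>_L: "\<pi> c v \<in> L" if "v \<in> L" for c v
    using that orthomorphism_on_mem by (simp add: \<pi>_def)
  have "inj_on \<sigma> L" "inj_on (\<lambda>x. x + \<sigma> x) L"
    using orth by (auto simp: orthomorphism_on_def bij_betw_def)
  then have \<pi>_inj: "inj_on (\<pi> c) L" for c
    by (auto simp: \<pi>_def inj_on_def)
  obtain c d where cd: "c \<in> {a, b, a + b}" "d \<in> {a, b, a + b}"
    and "z = \<pi> c x + c" "z = \<pi> d y + d"
    using z unfolding triple by blast
  then have "c = d \<and> \<pi> c x = \<pi> c y"
    using ext_coset_eq_iff[of "\<pi> c x" "\<pi> d y" c d] \<pi>_L x y cd by auto
  then show ?thesis
    using \<pi>_inj x y by (auto dest: inj_onD)
qed

lemma ext_triples_Union: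
  "\<Union>(ext_triple \<sigma> a b ` L) = {x + c | x c. x \<in> L \<and> c \<in> {a, b, a + b}}"
proof (rule set_eqI, rule iffI)
  fix z assume "z \<in> \<Union>(ext_triple \<sigma> a b ` L)"
  then obtain x where x: "x \<in> L" and "z \<in> ext_triple \<sigma> a b x" by blast
  then consider "z = x + a" | "z = \<sigma> x + b" | "z = x + \<sigma> x + (a + b)"
    by (auto simp: ext_triple_def)
  then show "z \<in> {x + c | x c. x \<in> L \<and> c \<in> {a, b, a + b}}"
    using x orthomorphism_on_mem[OF x] by cases blast+
next
  fix z assume "z \<in> {x + c | x c. x \<in> L \<and> c \<in> {a, b, a + b}}"
  then obtain y c where y: "y \<in> L" and c: "c \<in> {a, b, a + b}" and z: "z = y + c" by blast
  have onto: "\<sigma> ` L = L" "(\<lambda>x. x + \<sigma> x) ` L = L"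
    using orth by (auto simp: orthomorphism_on_def bij_betw_def)
  from c consider "c = a" | "c = b" | "c = a + b" by blast
  then obtain x where "x \<in> L" "z \<in> ext_triple \<sigma> a b x"
  proof cases
    case 1
    then show thesis using that[of y] y z by (simp add: ext_triple_def)
  next
    case 2
    then obtain x where "x \<in> L" "y = \<sigma> x" using y onto(1) by blast
    then show thesis using that[of x] z 2 by (simp add: ext_triple_def)
  next
    case 3
    then obtain x where "x \<in> L" "y = x + \<sigma> x" using y onto(2) by (metis imageE)
    then show thesis using that[of x] z 3 by (simp add: ext_triple_def)
  qed
  then show "z \<in> \<Union>(ext_triple \<sigma> a b ` L)" by blast
qed

lemma ext_triples_partition:
  "partition_on {x + c | x c. x \<in> L \<and> c \<in> {a, b, a + b}} (ext_triple \<sigma> a b ` L)"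
  "zero_sum_blocks {3} (ext_triple \<sigma> a b ` L)"
proof -
  show "partition_on {x + c | x c. x \<in> L \<and> c \<in> {a, b, a + b}} (ext_triple \<sigma> a b ` L)"
  proof (rule partition_onI)
    show "\<Union>(ext_triple \<sigma> a b ` L) = {x + c | x c. x \<in> L \<and> c \<in> {a, b, a + b}}"
      by (rule ext_triples_Union)
    show "disjnt p q" if "p \<in> ext_triple \<sigma> a b ` L" "q \<in> ext_triple \<sigma> a b ` L" "p \<noteq> q" for p q
      using that ext_triple_disjoint unfolding disjnt_def by blast
    show "{} \<notin> ext_triple \<sigma> a b ` L"
      by (auto simp: ext_triple_def)
  qed
  show "zero_sum_blocks {3} (ext_triple \<sigma> a b ` L)"
    using ext_triple_card ext_triple_sum by (simp add: zero_sum_blocks_def)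
qed

end

section \<open>Layers of the cube \<open>F\<^sub>2\<^sup>n\<close>\<close>

lemma exhaust_2: "(x::2) = 0 \<or> x = 1"
proof (induct x)
  case (of_int z) then have "z = 0 \<or> z = 1" by simp arith
  then show ?case by auto
qed

lemma add_self_2 [simp]: "(c::2) + c = 0"
  using exhaust_2[of c] by auto

lemma add_self_vec [simp]: "(v::nat \<Rightarrow> 2) + v = 0"
  by (rule ext) (simp only: plus_fun_apply zero_fun_apply add_self_2)

definition cube :: "nat \<Rightarrow> (nat \<Rightarrow> 2) set" where
  "cube n = {v. \<forall>k\<ge>n. v k = 0}"

lemma card_cube: "card (cube n) = 2 ^ n"
proof -
  have "bij_betw (\<lambda>v. restrict v {..<n}) (cube n) ({..<n} \<rightarrow>\<^sub>E (UNIV :: 2 set))"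
    by (rule bij_betwI[where g = "\<lambda>f k. if k < n then f k else 0"])
       (auto simp: cube_def fun_eq_iff PiE_def extensional_def)
  then show ?thesis
    by (simp add: bij_betw_same_card card_PiE)
qed

lemma finite_cube: "finite (cube n)"
  using card_cube[of n] by (simp add: card_ge_0_finite)

lemma cube_add: "v \<in> cube n \<Longrightarrow> w \<in> cube n \<Longrightarrow> v + w \<in> cube n"
  by (simp add: cube_def)

lemma cube_mono: "n \<le> n' \<Longrightarrow> cube n \<subseteq> cube n'"
  by (auto simp: cube_def)

lemma zero_in_cube [simp]: "0 \<in> cube n"
  by (simp add: cube_def)

lemma cube_0: "cube 0 = {0}"
  by (auto simp: cube_def fun_eq_iff)

definition unit_vec :: "nat \<Rightarrow> nat \<Rightarrow> 2" where
  "unit_vec k = (\<lambda>i. if i = k then 1 else 0)"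

lemma cube_add_two_diff:
  "cube (k + 2) - cube k =
     {x + c | x c. x \<in> cube k \<and> c \<in> {unit_vec k, unit_vec (Suc k), unit_vec k + unit_vec (Suc k)}}"
  (is "_ = {x + c | x c. x \<in> cube k \<and> c \<in> ?C}")
proof (rule set_eqI, rule iffI)
  fix v assume v: "v \<in> cube (k + 2) - cube k"
  define x where "x = v(k := 0, Suc k := 0)"
  define c where "c = (\<lambda>i. if i = k then v k else if i = Suc k then v (Suc k) else 0)"
  have x: "x \<in> cube k" using v by (auto simp: cube_def x_def)
  obtain i where "k \<le> i" "v i \<noteq> 0" using v by (auto simp: cube_def)
  moreover have "i < k + 2"
  proof (rule ccontr)
    assume "\<not> i < k + 2"
    then show False using v \<open>v i \<noteq> 0\<close> by (simp add: cube_def)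
  qed
  ultimately have "i = k \<or> i = Suc k" by linarith
  then have "v k \<noteq> 0 \<or> v (Suc k) \<noteq> 0" using \<open>v i \<noteq> 0\<close> by auto
  then have "c \<in> ?C"
    using exhaust_2[of "v k"] exhaust_2[of "v (Suc k)"] by (auto simp: c_def unit_vec_def fun_eq_iff)
  moreover have "v = x + c"
    by (simp add: x_def c_def fun_eq_iff)
  ultimately show "v \<in> {x + c | x c. x \<in> cube k \<and> c \<in> ?C}" using x by blast
next
  fix v assume "v \<in> {x + c | x c. x \<in> cube k \<and> c \<in> ?C}"
  then obtain x c where x: "x \<in> cube k" and c: "c \<in> ?C" and v: "v = x + c" by blast
  have "c \<in> cube (k + 2)" using c by (auto simp: cube_def unit_vec_def)
  then have "v \<in> cube (k + 2)" using x cube_mono[of k "k + 2"] cube_add v by auto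
  moreover have "c k \<noteq> 0 \<or> c (Suc k) \<noteq> 0" using c by (auto simp: unit_vec_def)
  then have "v \<notin> cube k" using x v unfolding cube_def by (auto intro: le_SucI)
  ultimately show "v \<in> cube (k + 2) - cube k" by blast
qed

lemma orthomorphism_on_cube:
  assumes "inj \<sigma>" "inj (\<lambda>v. v + \<sigma> v)" "\<sigma> ` cube n \<subseteq> cube n"
  shows "orthomorphism_on (cube n) \<sigma>"
proof -
  have "(\<lambda>v. v + \<sigma> v) ` cube n \<subseteq> cube n"
    using assms(3) cube_add by blast
  then show ?thesis
    using assms unfolding orthomorphism_on_def bij_betw_def
    by (meson endo_inj_surj finite_cube inj_on_subset subset_UNIV)
qed

definition layer :: "((nat \<Rightarrow> 2) \<Rightarrow> nat \<Rightarrow> 2) \<Rightarrow> nat \<Rightarrow> (nat \<Rightarrow> 2) set set" where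
  "layer \<sigma> k = ext_triple \<sigma> (unit_vec k) (unit_vec (Suc k)) ` cube k"

lemma layer_partition:
  assumes "orthomorphism_on (cube k) \<sigma>"
  shows "partition_on (cube (k + 2) - cube k) (layer \<sigma> k)" "zero_sum_blocks {3} (layer \<sigma> k)"
proof -
  have "unit_vec k \<notin> cube k" "unit_vec (Suc k) \<notin> cube k" "unit_vec k + unit_vec (Suc k) \<notin> cube k"
    by (auto simp: cube_def unit_vec_def dest!: spec[of _ k])
  note ext = ext_triples_partition[OF add_self_vec cube_add this assms]
  show "partition_on (cube (k + 2) - cube k) (layer \<sigma> k)"
    unfolding layer_def cube_add_two_diff using ext(1) .
  show "zero_sum_blocks {3} (layer \<sigma> k)"
    unfolding layer_def using ext(2) .
qed

lemma layers_partition: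
  assumes "\<And>j. j < N \<Longrightarrow> orthomorphism_on (cube (r + 2 * j)) \<sigma>"
  shows "partition_on (cube (r + 2 * N) - cube r) (\<Union>j<N. layer \<sigma> (r + 2 * j))"
    and "zero_sum_blocks {3} (\<Union>j<N. layer \<sigma> (r + 2 * j))"
proof -
  have "partition_on (cube (r + 2 * Suc j) - cube (r + 2 * j)) (layer \<sigma> (r + 2 * j))" if "j < N" for j
    using layer_partition(1)[OF assms[OF that]] by (simp add: algebra_simps)
  then show "partition_on (cube (r + 2 * N) - cube r) (\<Union>j<N. layer \<sigma> (r + 2 * j))"
    using partition_on_telescope[where L = "\<lambda>j. cube (r + 2 * j)"] cube_mono by simp
  show "zero_sum_blocks {3} (\<Union>j<N. layer \<sigma> (r + 2 * j))"
    using layer_partition(2)[OF assms] by (auto simp: zero_sum_blocks_def)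
qed

lemma layered_triple_partition:
  assumes "\<And>j. j \<le> N \<Longrightarrow> orthomorphism_on (cube (r + 2 * j)) \<sigma>"
  shows "\<exists>P. partition_on (cube (r + 2 * Suc N) - cube r) P \<and> zero_sum_blocks {3} P \<and>
    2 ^ (r + 2 * N) - 2 ^ r \<le> 3 * card {X \<in> P. X \<subseteq> cube (r + 2 * N)}"
proof (intro exI conjI)
  define P where "P = (\<Union>j<Suc N. layer \<sigma> (r + 2 * j))"
  define P_low where "P_low = (\<Union>j<N. layer \<sigma> (r + 2 * j))"
  show P: "partition_on (cube (r + 2 * Suc N) - cube r) P" "zero_sum_blocks {3} P"
    unfolding P_def using layers_partition[of "Suc N"] assms by simp_all
  have low: "partition_on (cube (r + 2 * N) - cube r) P_low" "zero_sum_blocks {3} P_low"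
    unfolding P_low_def using layers_partition[of N] assms by simp_all
  have "P_low \<subseteq> {X \<in> P. X \<subseteq> cube (r + 2 * N)}"
    using low(1) by (auto simp: P_def P_low_def partition_on_def)
  moreover have "finite P"
    using P(1) finite_cube by (blast intro: finite_elements)
  ultimately have "card P_low \<le> card {X \<in> P. X \<subseteq> cube (r + 2 * N)}"
    by (intro card_mono) auto
  moreover have "card (cube (r + 2 * N) - cube r) = 2 ^ (r + 2 * N) - 2 ^ r"
    by (simp add: card_Diff_subset finite_cube cube_mono card_cube)
  ultimately show "2 ^ (r + 2 * N) - 2 ^ r \<le> 3 * card {X \<in> P. X \<subseteq> cube (r + 2 * N)}"
    using card_partition_triples[OF _ low] finite_cube by simp
qed

section \<open>Orthomorphisms of \<open>F\<^sub>2\<^sup>n\<close>\<close>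

(* Multiplication by a primitive cube root of unity of F_4 on each coordinate pair (2i, 2i+1). *)
definition omega :: "(nat \<Rightarrow> 2) \<Rightarrow> nat \<Rightarrow> 2" where
  "omega v k = (if even k then v (Suc k) else v (k - 1) + v k)"

lemma omega_add_self:
  "(v + omega v) k = (if even k then v k + v (Suc k) else v (k - 1))"
  by (simp add: omega_def add.left_commute[of "v k"])

lemma inj_omega: "inj omega"
proof (rule injI)
  fix v w assume eq: "omega v = omega w"
  show "v = w"
  proof
    fix k
    show "v k = w k"
    proof (cases "even k")
      case True
      then have "v (Suc k) = w (Suc k)" "v k + v (Suc k) = w k + w (Suc k)"
        using fun_cong[OF eq, of k] fun_cong[OF eq, of "Suc k"] by (simp_all add: omega_def)
      then show ?thesis by simp
    next
      case False
      then show ?thesis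
        using fun_cong[OF eq, of "k - 1"] by (simp add: omega_def)
    qed
  qed
qed

lemma inj_omega_add_self: "inj (\<lambda>v. v + omega v)"
proof (rule injI)
  fix v w assume eq: "v + omega v = w + omega w"
  have even_eq: "v k = w k" if "even k" for k
    using fun_cong[OF eq, of "Suc k"] that by (simp only: omega_add_self) simp
  show "v = w"
  proof
    fix k
    show "v k = w k"
    proof (cases "even k")
      case True
      then show ?thesis by (rule even_eq)
    next
      case False
      then have "v (k - 1) = w (k - 1)" by (simp add: even_eq)
      moreover have "v (k - 1) + v k = w (k - 1) + w k"
        using fun_cong[OF eq, of "k - 1"] False by (simp only: omega_add_self) simp
      ultimately show ?thesis by simp
    qed
  qed
qed

lemma omega_cube:
  assumes "v \<in> cube (2 * j)" shows "omega v \<in> cube (2 * j)"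
proof -
  have "2 * j \<le> k - 1" if "odd k" "2 * j \<le> k" for k
    using that by presburger
  then show ?thesis using assms by (auto simp: cube_def omega_def)
qed

lemma orthomorphism_omega: "orthomorphism_on (cube (2 * j)) omega"
  using inj_omega inj_omega_add_self omega_cube by (blast intro: orthomorphism_on_cube)

(* The companion matrix of X^3 + X + 1 on the coordinates 0, 1, 2 and omega on the rest.
   Since X^3 + X + 1 has no root in F_2, neither the matrix nor the matrix plus 1 is singular. *)
definition omega3 :: "(nat \<Rightarrow> 2) \<Rightarrow> nat \<Rightarrow> 2" where
  "omega3 v k = (if k = 0 then v 2 else if k = 1 then v 0 + v 2 else if k = 2 then v 1
     else omega (\<lambda>i. v (i + 3)) (k - 3))"

lemma omega3_shift: "(\<lambda>i. omega3 v (i + 3)) = omega (\<lambda>i. v (i + 3))"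
  by (simp add: omega3_def)

lemma eq_by_shift3:
  fixes v w :: "nat \<Rightarrow> 2"
  assumes "(\<lambda>i. v (i + 3)) = (\<lambda>i. w (i + 3))" "v 0 = w 0" "v 1 = w 1" "v 2 = w 2"
  shows "v = w"
proof
  fix k
  show "v k = w k"
  proof (cases "k < 3")
    case True
    then have "k = 0 \<or> k = 1 \<or> k = 2" by auto
    then show ?thesis using assms(2-4) by auto
  next
    case False
    then show ?thesis using fun_cong[OF assms(1), of "k - 3"] by simp
  qed
qed

lemma inj_omega3: "inj omega3"
proof (rule injI)
  fix v w assume eq: "omega3 v = omega3 w"
  have "omega (\<lambda>i. v (i + 3)) = omega (\<lambda>i. w (i + 3))"
    using arg_cong[OF eq, of "\<lambda>u i. u (i + 3)"] by (simp add: omega3_shift)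
  then have "(\<lambda>i. v (i + 3)) = (\<lambda>i. w (i + 3))" by (rule injD[OF inj_omega])
  moreover have "v 2 = w 2" "v 0 + v 2 = w 0 + w 2" "v 1 = w 1"
    using fun_cong[OF eq, of 0] fun_cong[OF eq, of 1] fun_cong[OF eq, of 2] by (simp_all add: omega3_def)
  ultimately show "v = w" by (intro eq_by_shift3[of v w]) simp_all
qed

lemma inj_omega3_add_self: "inj (\<lambda>v. v + omega3 v)"
proof (rule injI)
  fix v w assume eq: "v + omega3 v = w + omega3 w"
  have "(\<lambda>i. v (i + 3)) + omega (\<lambda>i. v (i + 3)) = (\<lambda>i. w (i + 3)) + omega (\<lambda>i. w (i + 3))"
    using arg_cong[OF eq, of "\<lambda>u i. u (i + 3)"] by (simp add: fun_eq_iff omega3_def)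
  then have "(\<lambda>i. v (i + 3)) = (\<lambda>i. w (i + 3))" by (rule injD[OF inj_omega_add_self])
  moreover have t: "v 0 + (v 0 + v 2) = w 0 + (w 0 + w 2)" "v 1 + (v 0 + v 2) = w 1 + (w 0 + w 2)"
      "v 2 + v 1 = w 2 + w 1"
    using fun_cong[OF eq, of 0] fun_cong[OF eq, of 1] fun_cong[OF eq, of 2] by (simp_all add: omega3_def)
  then have "v 2 = w 2" by (simp add: add.assoc[symmetric])
  moreover have "v 1 = w 1" using t(3) \<open>v 2 = w 2\<close> by simp
  moreover have "v 0 = w 0" using t(2) \<open>v 2 = w 2\<close> \<open>v 1 = w 1\<close> by simp
  ultimately show "v = w" by (intro eq_by_shift3[of v w]) simp_all
qed

lemma omega3_cube:
  assumes "v \<in> cube (3 + 2 * j)" shows "omega3 v \<in> cube (3 + 2 * j)"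
proof -
  have "(\<lambda>i. v (i + 3)) \<in> cube (2 * j)" using assms by (simp add: cube_def)
  then have "omega (\<lambda>i. v (i + 3)) \<in> cube (2 * j)" by (rule omega_cube)
  then show ?thesis by (auto simp: cube_def omega3_def)
qed

lemma orthomorphism_omega3: "orthomorphism_on (cube (3 + 2 * j)) omega3"
  using inj_omega3 inj_omega3_add_self omega3_cube by (blast intro: orthomorphism_on_cube)

section \<open>The group \<open>Z\<^sub>2\<^sup>m \<times> Z\<^sub>4\<close>\<close>

lemma exhaust_4: "(x::4) = 0 \<or> x = 1 \<or> x = 2 \<or> x = 3"
proof (induct x)
  case (of_int z) then have "z = 0 \<or> z = 1 \<or> z = 2 \<or> z = 3" by simp arith
  then show ?case by auto
qed

lemma Gm_eq: "Gm m = cube m \<times> UNIV"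
  by (auto simp: Gm_def cube_def)

lemma card_Gm: "card (Gm m) = 2 ^ (m + 2)"
  by (simp add: Gm_eq card_cartesian_product card_cube power_add)

lemma elt_add_self_eq_0_iff: "x + x = (0::elt) \<longleftrightarrow> snd x = 0 \<or> snd x = 2"
proof -
  have "2 * a = 0 \<longleftrightarrow> a = 0 \<or> a = 2" for a :: 4
    using exhaust_4[of a] by auto
  then show ?thesis by (cases x) (simp add: zero_prod_def)
qed

lemma I_set_Gm: "I_set (Gm m) = cube m \<times> {0, 2} - {0}"
  unfolding I_set_def Gm_eq elt_add_self_eq_0_iff by auto

lemma card_I_set_Gm: "card (I_set (Gm m)) = 2 ^ (m + 1) - 1"
  by (simp add: I_set_Gm card_cartesian_product card_cube finite_cube zero_prod_def)

lemma f_val_Gm: "f_val (Gm m) = 2 ^ m"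
proof -
  have "(2::nat) ^ (m + 2) - (2 ^ (m + 1) - 1) - 1 = 2 * 2 ^ m"
    by (simp add: power_add)
  then show ?thesis
    by (simp add: f_val_def card_Gm card_I_set_Gm)
qed

(* Identifies F_2^(m+1) with the elements of order at most 2: coordinate m becomes the
   Z_4-component, so that cube m is mapped onto cube m x {0}. *)
definition embed :: "nat \<Rightarrow> (nat \<Rightarrow> 2) \<Rightarrow> elt" where
  "embed m v = (v(m := 0), if v m = 0 then 0 else 2)"

lemma embed_add: "embed m (v + w) = embed m v + embed m w"
  using exhaust_2[of "v m"] exhaust_2[of "w m"] by (auto simp: embed_def fun_eq_iff)

lemma embed_zero: "embed m 0 = 0"
  by (simp add: embed_def zero_prod_def fun_eq_iff)

lemma inj_embed: "inj (embed m)"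
proof (rule injI)
  fix v w assume eq: "embed m v = embed m w"
  then have "v m = w m"
    using exhaust_2[of "v m"] exhaust_2[of "w m"] by (auto simp: embed_def split: if_splits)
  moreover have "v(m := 0) = w(m := 0)"
    using eq by (simp add: embed_def)
  ultimately show "v = w"
    by (metis fun_upd_triv fun_upd_upd)
qed

lemma embed_cube: "v \<in> cube m \<Longrightarrow> embed m v = (v, 0)"
  by (auto simp: embed_def cube_def fun_eq_iff)

lemma embed_cube_Suc: "embed m ` cube (Suc m) = cube m \<times> {0, 2}"
proof
  show "embed m ` cube (Suc m) \<subseteq> cube m \<times> {0, 2}"
    by (auto simp: embed_def cube_def)
  show "cube m \<times> {0, 2} \<subseteq> embed m ` cube (Suc m)"
  proof clarify
    fix v :: "nat \<Rightarrow> 2" and a :: 4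
    assume v: "v \<in> cube m" and a: "a \<in> {0, 2}"
    define w where "w = v(m := if a = 0 then 0 else 1)"
    have "w \<in> cube (Suc m)" "embed m w = (v, a)"
      using v a by (auto simp: w_def cube_def embed_def fun_eq_iff)
    then show "(v, a) \<in> embed m ` cube (Suc m)" by force
  qed
qed

section \<open>Trading pairs for triples\<close>

definition order4_pair :: "(nat \<Rightarrow> 2) \<Rightarrow> elt set" where
  "order4_pair v = {(v, 1), (v, 3)}"

lemma inj_order4_pair: "inj order4_pair"
  by (rule injI) (auto simp: order4_pair_def doubleton_eq_iff)

lemma card_order4_pair [simp]: "card (order4_pair v) = 2"
  by (simp add: order4_pair_def)

lemma order4_pairs_partition:
  "partition_on (A \<times> {1, 3}) (order4_pair ` A)" "zero_sum_blocks {2} (order4_pair ` A)"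
proof -
  show "partition_on (A \<times> {1, 3}) (order4_pair ` A)"
    by (rule partition_onI) (auto simp: order4_pair_def disjnt_def)
  show "zero_sum_blocks {2} (order4_pair ` A)"
    by (auto simp: zero_sum_blocks_def order4_pair_def zero_prod_def)
qed

definition mix_triples :: "(nat \<Rightarrow> 2) \<Rightarrow> (nat \<Rightarrow> 2) \<Rightarrow> (nat \<Rightarrow> 2) \<Rightarrow> elt set set" where
  "mix_triples q1 q2 q3 =
     {{(q1, 0), (q2, 1), (q3, 3)}, {(q2, 0), (q3, 1), (q1, 3)}, {(q3, 0), (q1, 1), (q2, 3)}}"

lemma mix_triples_partition:
  assumes "q1 \<noteq> q2" "q1 \<noteq> q3" "q2 \<noteq> q3" "q1 + q2 + q3 = 0"
  shows "partition_on ({(q1, 0), (q2, 0), (q3, 0)} \<union> order4_pair q1 \<union> order4_pair q2 \<union> order4_pair q3)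
      (mix_triples q1 q2 q3)"
    and "zero_sum_blocks {3} (mix_triples q1 q2 q3)"
proof -
  show "partition_on ({(q1, 0), (q2, 0), (q3, 0)} \<union> order4_pair q1 \<union> order4_pair q2 \<union> order4_pair q3)
      (mix_triples q1 q2 q3)"
    unfolding partition_on_def mix_triples_def order4_pair_def using assms(1-3)
    by (simp add: pairwise_insert disjnt_def) auto
  have "q2 + (q3 + q1) = 0" "q3 + (q1 + q2) = 0" "q1 + (q2 + q3) = 0"
    using assms(4) by (simp_all add: ac_simps)
  then show "zero_sum_blocks {3} (mix_triples q1 q2 q3)"
    using assms(1-3) by (auto simp: zero_sum_blocks_def mix_triples_def zero_prod_def)
qed

definition mixable_triples :: "elt set set \<Rightarrow> elt set set" where
  "mixable_triples P = {X \<in> P. \<exists>q1 q2 q3. X = {(q1, 0), (q2, 0), (q3, 0)} \<and>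
     q1 \<noteq> q2 \<and> q1 \<noteq> q3 \<and> q2 \<noteq> q3 \<and>
     order4_pair q1 \<in> P \<and> order4_pair q2 \<in> P \<and> order4_pair q3 \<in> P}"

lemma mixable_triples_replace:
  assumes P: "partition_on S P" and X: "X \<in> P" "X = {(q1, 0), (q2, 0), (q3, 0)}"
    and P': "P - {X, order4_pair q1, order4_pair q2, order4_pair q3} \<subseteq> P'"
  shows "mixable_triples P - {X} \<subseteq> mixable_triples P'"
proof
  fix Y assume Y: "Y \<in> mixable_triples P - {X}"
  then obtain p1 p2 p3 where Y_eq: "Y = {(p1, 0), (p2, 0), (p3, 0)}"
    and p: "p1 \<noteq> p2" "p1 \<noteq> p3" "p2 \<noteq> p3"
    and p_pairs: "order4_pair p1 \<in> P" "order4_pair p2 \<in> P" "order4_pair p3 \<in> P"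
    by (auto simp: mixable_triples_def)
  have "Y \<in> P" "Y \<noteq> X" using Y by (auto simp: mixable_triples_def)
  then have "X \<inter> Y = {}"
    using disjointD[OF partition_onD2[OF P] X(1)] by blast
  then have p_q: "p \<notin> {q1, q2, q3}" if "p \<in> {p1, p2, p3}" for p
    using that unfolding X Y_eq by blast
  have "order4_pair p \<noteq> X" for p
  proof -
    have "(q1, 0) \<in> X" "(q1, 0) \<notin> order4_pair p" by (simp_all add: X(2) order4_pair_def)
    then show ?thesis by blast
  qed
  then have "order4_pair p \<in> P'" if "p \<in> {p1, p2, p3}" "order4_pair p \<in> P" for p
  proof -
    have "order4_pair p \<notin> {X, order4_pair q1, order4_pair q2, order4_pair q3}"
      using p_q[OF that(1)] \<open>order4_pair p \<noteq> X\<close> by (simp add: inj_eq[OF inj_order4_pair])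
    then show ?thesis using that(2) P' by blast
  qed
  then have "order4_pair p1 \<in> P'" "order4_pair p2 \<in> P'" "order4_pair p3 \<in> P'"
    using p_pairs by simp_all
  moreover have "Y \<noteq> order4_pair q" for q
  proof
    assume "Y = order4_pair q"
    then have "card Y = 2" by simp
    then show False using p by (simp add: Y_eq)
  qed
  then have "Y \<in> P'" using \<open>Y \<in> P\<close> \<open>Y \<noteq> X\<close> P' by blast
  ultimately show "Y \<in> mixable_triples P'"
    unfolding mixable_triples_def using Y_eq p by blast
qed

lemma mix_step:
  assumes P: "partition_on S P" "zero_sum_blocks {2, 3} P" "finite P"
    and X: "X \<in> mixable_triples P"
  obtains P' where "partition_on S P'" "zero_sum_blocks {2, 3} P'"
    "card (pair_blocks P') + 3 = card (pair_blocks P)"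
    "mixable_triples P - {X} \<subseteq> mixable_triples P'"
proof -
  obtain q1 q2 q3 where X_eq: "X = {(q1, 0), (q2, 0), (q3, 0)}"
    and q: "q1 \<noteq> q2" "q1 \<noteq> q3" "q2 \<noteq> q3"
    and pairs: "order4_pair q1 \<in> P" "order4_pair q2 \<in> P" "order4_pair q3 \<in> P"
    using X by (auto simp: mixable_triples_def)
  have "sum id X = 0" using X P(2) by (auto simp: mixable_triples_def zero_sum_blocks_def)
  then have q_sum: "q1 + q2 + q3 = 0"
    using q by (simp add: X_eq zero_prod_def add.assoc)
  note mix = mix_triples_partition[OF q q_sum]
  define R where "R = {X, order4_pair q1, order4_pair q2, order4_pair q3}"
  have R: "R \<subseteq> P" using X pairs by (auto simp: R_def mixable_triples_def)
  show thesis
  proof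
    show "partition_on S ((P - R) \<union> mix_triples q1 q2 q3)"
      using mix(1) by (intro partition_on_replace[OF P(1) R]) (simp add: R_def X_eq Un_ac)
    show "zero_sum_blocks {2, 3} ((P - R) \<union> mix_triples q1 q2 q3)"
      using P(2) mix(2) by (auto elim: zero_sum_blocks_mono)
    have "card X = 3" using q by (simp add: X_eq)
    then have "pair_blocks ((P - R) \<union> mix_triples q1 q2 q3)
        = pair_blocks P - {order4_pair q1, order4_pair q2, order4_pair q3}"
      using mix(2) by (auto simp: R_def zero_sum_blocks_def)
    moreover have "card {order4_pair q1, order4_pair q2, order4_pair q3} = 3"
      using q inj_order4_pair by (simp add: inj_eq)
    moreover have "{order4_pair q1, order4_pair q2, order4_pair q3} \<subseteq> pair_blocks P"
      using pairs by simp
    ultimately show "card (pair_blocks ((P - R) \<union> mix_triples q1 q2 q3)) + 3 = card (pair_blocks P)"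
      using P(3) card_mono[of "pair_blocks P" "{order4_pair q1, order4_pair q2, order4_pair q3}"]
      by (simp add: card_Diff_subset)
    show "mixable_triples P - {X} \<subseteq> mixable_triples ((P - R) \<union> mix_triples q1 q2 q3)"
      using X by (intro mixable_triples_replace[OF P(1) _ X_eq]) (auto simp: R_def mixable_triples_def)
  qed
qed

lemma mix_steps:
  assumes "finite S" "partition_on S P" "zero_sum_blocks {2, 3} P"
    and "k \<le> card (mixable_triples P)"
  shows "\<exists>P'. partition_on S P' \<and> zero_sum_blocks {2, 3} P' \<and>
    card (pair_blocks P') = card (pair_blocks P) - 3 * k"
  using assms(2-4)
proof (induction k arbitrary: P)
  case 0
  then show ?case by auto
next
  case (Suc k)
  have fin: "finite P" using finite_elements[OF assms(1) Suc.prems(1)] .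
  have "mixable_triples P \<noteq> {}"
    using Suc.prems(3) by force
  then obtain X where X: "X \<in> mixable_triples P" by blast
  obtain P' where P': "partition_on S P'" "zero_sum_blocks {2, 3} P'"
    and pairs: "card (pair_blocks P') + 3 = card (pair_blocks P)"
    and mixable: "mixable_triples P - {X} \<subseteq> mixable_triples P'"
    using mix_step[OF Suc.prems(1,2) fin X] .
  have "finite (mixable_triples P')"
    using finite_elements[OF assms(1) P'(1)] by (simp add: mixable_triples_def)
  then have "k \<le> card (mixable_triples P')"
    using Suc.prems(3) card_mono[OF _ mixable] X fin by (simp add: card_Diff_singleton_if mixable_triples_def)
  then show ?case
    using Suc.IH[OF P'] pairs by auto
qed

definition vec3 :: "2 \<Rightarrow> 2 \<Rightarrow> 2 \<Rightarrow> nat \<Rightarrow> 2" where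
  "vec3 a b c = (\<lambda>i. if i = 0 then a else if i = 1 then b else if i = 2 then c else 0)"

lemma vec3_add [simp]: "vec3 a b c + vec3 a' b' c' = vec3 (a + a') (b + b') (c + c')"
  by (rule ext) (simp add: vec3_def)

lemma vec3_eq_iff [simp]: "vec3 a b c = vec3 a' b' c' \<longleftrightarrow> a = a' \<and> b = b' \<and> c = c'"
proof
  assume "vec3 a b c = vec3 a' b' c'"
  from fun_cong[OF this, of 0] fun_cong[OF this, of 1] fun_cong[OF this, of 2]
  show "a = a' \<and> b = b' \<and> c = c'" by (simp add: vec3_def)
qed simp

lemma vec3_zero: "vec3 0 0 0 = 0"
  by (simp add: vec3_def fun_eq_iff)

lemma cube_3_minus_0:
  "cube 3 - {0} = {vec3 1 0 0, vec3 0 1 0, vec3 0 0 1, vec3 1 1 0, vec3 1 0 1, vec3 0 1 1, vec3 1 1 1}"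
proof -
  have cube_3: "cube 3 = {vec3 a b c | a b c. True}"
  proof (intro set_eqI iffI)
    fix v assume "v \<in> cube 3"
    then have "v = vec3 (v 0) (v 1) (v 2)"
      by (auto simp: cube_def vec3_def fun_eq_iff)
    then show "v \<in> {vec3 a b c | a b c. True}" by blast
  qed (auto simp: cube_def vec3_def)
  note zero = vec3_zero[symmetric]
  show ?thesis
  proof (intro set_eqI iffI)
    fix v assume "v \<in> cube 3 - {0}"
    then obtain a b c where "v = vec3 a b c" "\<not> (a = 0 \<and> b = 0 \<and> c = 0)"
      unfolding cube_3 zero by auto
    then show "v \<in> {vec3 1 0 0, vec3 0 1 0, vec3 0 0 1, vec3 1 1 0, vec3 1 0 1, vec3 0 1 1, vec3 1 1 1}"
      using exhaust_2[of a] exhaust_2[of b] exhaust_2[of c] by auto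
  qed (auto simp: cube_3 zero)
qed

definition base_vecs :: "(nat \<Rightarrow> 2) set" where
  "base_vecs = {vec3 0 0 0, vec3 1 0 0, vec3 0 1 0, vec3 0 0 1}"

(* With z_0, ..., z_3 = 0, e_0, e_1, e_2, the first four triples are
   {(z_i, 1), (z_(i+1), 3), (z_i + z_(i+1), 0)} with indices mod 4; the three nonzero vectors of
   cube 3 not of the form z_i + z_(i+1) sum to 0 and form the fifth. *)
definition base_triples :: "elt set set" where
  "base_triples =
     {{(vec3 0 0 0, 1), (vec3 1 0 0, 3), (vec3 1 0 0, 0)},
      {(vec3 1 0 0, 1), (vec3 0 1 0, 3), (vec3 1 1 0, 0)},
      {(vec3 0 1 0, 1), (vec3 0 0 1, 3), (vec3 0 1 1, 0)},
      {(vec3 0 0 1, 1), (vec3 0 0 0, 3), (vec3 0 0 1, 0)},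
      {(vec3 0 1 0, 0), (vec3 1 0 1, 0), (vec3 1 1 1, 0)}}"

lemma base_triples_partition:
  "partition_on ((cube 3 - {0}) \<times> {0} \<union> base_vecs \<times> {1, 3}) base_triples"
  "zero_sum_blocks {3} base_triples"
proof -
  have "\<Union>base_triples = (cube 3 - {0}) \<times> {0} \<union> base_vecs \<times> {1, 3}"
    unfolding cube_3_minus_0 base_vecs_def base_triples_def by blast
  moreover have "disjoint base_triples"
    by (simp add: base_triples_def pairwise_def disjnt_def)
  ultimately show "partition_on ((cube 3 - {0}) \<times> {0} \<union> base_vecs \<times> {1, 3}) base_triples"
    by (auto simp: partition_on_def base_triples_def)
  show "zero_sum_blocks {3} base_triples"
    by (simp add: zero_sum_blocks_def base_triples_def zero_prod_def vec3_zero)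
qed

lemma Gm_partition_pairs_triples:
  fixes Q B :: "elt set set"
  assumes r: "r \<le> m"
    and Q: "partition_on (cube m \<times> {0, 2} - cube r \<times> {0}) Q" "zero_sum_blocks {3} Q"
    and B: "partition_on ((cube r - {0}) \<times> {0} \<union> Z \<times> {1, 3}) B" "zero_sum_blocks {3} B"
    and Z: "Z \<subseteq> cube r"
  shows "\<exists>P. partition_on (Gm m - {0}) P \<and> zero_sum_blocks {2, 3} P \<and>
    card (pair_blocks P) = 2 ^ m - card Z \<and> {X \<in> Q. X \<subseteq> UNIV \<times> {0}} \<subseteq> mixable_triples P"
proof (intro exI conjI)
  define P where "P = Q \<union> B \<union> order4_pair ` (cube m - Z)"
  have rm: "cube r \<subseteq> cube m" using r by (rule cube_mono)
  have "Gm m - {0} = (cube m \<times> {0, 2} - cube r \<times> {0}) \<union> ((cube r - {0}) \<times> {0} \<union> Z \<times> {1, 3})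
      \<union> (cube m - Z) \<times> {1, 3}"
    using rm Z exhaust_4 by (auto simp: Gm_eq zero_prod_def)
  then show "partition_on (Gm m - {0}) P"
    unfolding P_def using Q(1) B(1) order4_pairs_partition(1) Z
    by (auto intro!: partition_on_Un)
  show "zero_sum_blocks {2, 3} P"
    using Q(2) B(2) order4_pairs_partition(2)[of "cube m - Z"]
    unfolding P_def zero_sum_blocks_def by auto
  have "pair_blocks P = order4_pair ` (cube m - Z)"
    using Q(2) B(2) order4_pairs_partition(2)
    by (auto simp: P_def zero_sum_blocks_def)
  then show "card (pair_blocks P) = 2 ^ m - card Z"
    using Z rm inj_order4_pair finite_cube
    by (simp add: card_image inj_on_subset card_Diff_subset card_cube finite_subset)
  show "{X \<in> Q. X \<subseteq> UNIV \<times> {0}} \<subseteq> mixable_triples P"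
  proof clarify
    fix X assume X: "X \<in> Q" "X \<subseteq> UNIV \<times> {0}"
    then obtain x y z where X_eq: "X = {x, y, z}" "x \<noteq> y" "y \<noteq> z" "x \<noteq> z"
      using Q(2) by (auto simp: zero_sum_blocks_def card_3_iff)
    then obtain q1 q2 q3 where q: "x = (q1, 0)" "y = (q2, 0)" "z = (q3, 0)"
      using X(2) by auto
    have "X \<subseteq> cube m \<times> {0, 2} - cube r \<times> {0}"
      using X(1) Q(1) by (auto simp: partition_on_def)
    then have "{q1, q2, q3} \<subseteq> cube m - Z"
      using Z by (auto simp: X_eq q)
    then show "X \<in> mixable_triples P"
      using X(1) X_eq q by (auto simp: mixable_triples_def P_def)
  qed
qed

lemma Gm_partition_with_mixable_triples:
  fixes \<sigma> :: "(nat \<Rightarrow> 2) \<Rightarrow> nat \<Rightarrow> 2" and B :: "elt set set"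
  assumes m: "m = r + 2 * N + 1"
    and orth: "\<And>j. j \<le> N \<Longrightarrow> orthomorphism_on (cube (r + 2 * j)) \<sigma>"
    and B: "partition_on ((cube r - {0}) \<times> {0} \<union> Z \<times> {1, 3}) B" "zero_sum_blocks {3} B"
    and Z: "Z \<subseteq> cube r"
  shows "\<exists>P. partition_on (Gm m - {0}) P \<and> zero_sum_blocks {2, 3} P \<and>
    card (pair_blocks P) = 2 ^ m - card Z \<and> 2 ^ (m - 1) - 2 ^ r \<le> 3 * card (mixable_triples P)"
proof -
  obtain PV where PV: "partition_on (cube (Suc m) - cube r) PV" "zero_sum_blocks {3} PV"
    and low: "2 ^ (m - 1) - 2 ^ r \<le> 3 * card {X \<in> PV. X \<subseteq> cube (m - 1)}"
    using layered_triple_partition[OF orth] m by auto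
  have "embed m ` cube r = cube r \<times> {0}"
    using m cube_mono[of r m] by (force simp: embed_cube)
  then have "embed m ` (cube (Suc m) - cube r) = cube m \<times> {0, 2} - cube r \<times> {0}"
    by (simp add: image_set_diff[OF inj_embed] embed_cube_Suc)
  then have Q: "partition_on (cube m \<times> {0, 2} - cube r \<times> {0}) ((`) (embed m) ` PV)"
      "zero_sum_blocks {3} ((`) (embed m) ` PV)"
    using partition_on_zero_sum_image[OF inj_embed[of m] embed_add[of m] embed_zero[of m] PV] by auto
  obtain P where P: "partition_on (Gm m - {0}) P" "zero_sum_blocks {2, 3} P"
      "card (pair_blocks P) = 2 ^ m - card Z"
    and mixable: "{X \<in> (`) (embed m) ` PV. X \<subseteq> UNIV \<times> {0}} \<subseteq> mixable_triples P"
    using Gm_partition_pairs_triples[OF _ Q B Z] m by auto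
  have "(`) (embed m) ` {X \<in> PV. X \<subseteq> cube (m - 1)} \<subseteq> mixable_triples P"
    using mixable cube_mono[of "m - 1" m] by (force simp: embed_cube)
  moreover have "finite (mixable_triples P)"
    using finite_elements[OF _ P(1)] by (simp add: Gm_eq finite_cube mixable_triples_def)
  ultimately have "card ((`) (embed m) ` {X \<in> PV. X \<subseteq> cube (m - 1)}) \<le> card (mixable_triples P)"
    by (simp add: card_mono)
  moreover have "card ((`) (embed m) ` {X \<in> PV. X \<subseteq> cube (m - 1)}) = card {X \<in> PV. X \<subseteq> cube (m - 1)}"
    using inj_on_image[OF inj_on_subset[OF inj_embed[of m] subset_UNIV]] by (rule card_image)
  ultimately have "2 ^ (m - 1) - 2 ^ r \<le> 3 * card (mixable_triples P)"
    using low by linarith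
  then show ?thesis using P by blast
qed

lemma zero_sum_partition_Gm:
  fixes \<sigma> :: "(nat \<Rightarrow> 2) \<Rightarrow> nat \<Rightarrow> 2" and B :: "elt set set"
  assumes m: "m = r + 2 * N + 1"
    and orth: "\<And>j. j \<le> N \<Longrightarrow> orthomorphism_on (cube (r + 2 * j)) \<sigma>"
    and B: "partition_on ((cube r - {0}) \<times> {0} \<union> Z \<times> {1, 3}) B" "zero_sum_blocks {3} B"
    and Z: "Z \<subseteq> cube r"
    and k: "3 * k \<le> 2 ^ (m - 1) - 2 ^ r"
    and t: "t = card Z + 3 * k" "t \<le> 2 ^ m"
    and div3: "(card (I_set (Gm m)) + 2 * t) mod 3 = 0"
  shows "zero_sum_partition (Gm m - {0})
    (replicate_mset (f_val (Gm m) - t) 2 + replicate_mset ((card (I_set (Gm m)) + 2 * t) div 3) 3)"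
proof -
  obtain P where P: "partition_on (Gm m - {0}) P" "zero_sum_blocks {2, 3} P"
      "card (pair_blocks P) = 2 ^ m - card Z" "2 ^ (m - 1) - 2 ^ r \<le> 3 * card (mixable_triples P)"
    using Gm_partition_with_mixable_triples[OF m orth B Z] by blast
  have fin: "finite (Gm m - {0})" by (simp add: Gm_eq finite_cube)
  have "k \<le> card (mixable_triples P)" using k P(4) by linarith
  then obtain P' where P': "partition_on (Gm m - {0}) P'" "zero_sum_blocks {2, 3} P'"
      "card (pair_blocks P') = card (pair_blocks P) - 3 * k"
    using mix_steps[OF fin P(1,2)] by blast
  then have pairs: "card (pair_blocks P') = f_val (Gm m) - t"
    using P(3) t(1) by (simp add: f_val_Gm)
  have "0 \<in> Gm m" by (simp add: Gm_eq zero_prod_def)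
  then have "card (Gm m - {0}) = 4 * 2 ^ m - 1"
    using fin by (simp add: card_Gm power_add)
  moreover have "3 * ((card (I_set (Gm m)) + 2 * t) div 3) = card (I_set (Gm m)) + 2 * t"
    using div3 by presburger
  moreover have "card (I_set (Gm m)) = 2 * 2 ^ m - 1" "1 \<le> (2::nat) ^ m"
    by (simp_all add: card_I_set_Gm)
  ultimately have "2 * card (pair_blocks P') + 3 * ((card (I_set (Gm m)) + 2 * t) div 3) = card (Gm m - {0})"
    using pairs t(2) unfolding f_val_Gm by linarith
  then show ?thesis
    using zero_sum_partition_of_blocks[OF fin P'(1,2)] pairs by simp
qed

lemma pow2_mod_3: "(2::nat) ^ n mod 3 = (if even n then 1 else 2)"
proof (induction n)
  case 0
  then show ?case by simp
next
  case (Suc n)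
  have "(2::nat) ^ Suc n mod 3 = 2 * (2 ^ n mod 3) mod 3"
    by (simp add: mod_mult_right_eq)
  then show ?case using Suc by auto
qed

lemma zero_sum_partition_Gm_odd:
  assumes m: "odd m" and t: "1000 * t \<le> 2 ^ m"
    and div3: "(card (I_set (Gm m)) + 2 * t) mod 3 = 0"
  shows "zero_sum_partition (Gm m - {0})
    (replicate_mset (f_val (Gm m) - t) 2 + replicate_mset ((card (I_set (Gm m)) + 2 * t) div 3) 3)"
proof (rule zero_sum_partition_Gm[where N = "m div 2" and \<sigma> = omega])
  show "m = 0 + 2 * (m div 2) + 1"
    using m by presburger
  have "(2::nat) ^ (m + 1) mod 3 = 1" "1 \<le> (2::nat) ^ (m + 1)"
    using m pow2_mod_3[of "m + 1"] by simp_all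
  then show "t = card {} + 3 * (t div 3)"
    using div3 by (simp add: card_I_set_Gm) presburger
  have "(2::nat) ^ m = 2 * 2 ^ (m - 1)"
    using m by (cases m) simp_all
  moreover have "3 * (t div 3) \<le> t" by simp
  ultimately show "3 * (t div 3) \<le> 2 ^ (m - 1) - 2 ^ 0"
    using t unfolding power_0 by linarith
  show "t \<le> 2 ^ m"
    using t by linarith
qed (use m div3 in \<open>auto simp: orthomorphism_omega cube_0 partition_on_empty zero_sum_blocks_def\<close>)

lemma zero_sum_partition_Gm_even:
  assumes m: "even m" "5 \<le> m" and t: "3 \<le> t" "1000 * t \<le> 2 ^ m"
    and div3: "(card (I_set (Gm m)) + 2 * t) mod 3 = 0"
  shows "zero_sum_partition (Gm m - {0})
    (replicate_mset (f_val (Gm m) - t) 2 + replicate_mset ((card (I_set (Gm m)) + 2 * t) div 3) 3)"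
proof (rule zero_sum_partition_Gm)
  show "m = 3 + 2 * ((m - 4) div 2) + 1"
    using m by presburger
  have "(2::nat) ^ (m + 1) mod 3 = 2" "1 \<le> (2::nat) ^ (m + 1)"
    using m pow2_mod_3[of "m + 1"] by simp_all
  then have "t mod 3 = 1"
    using div3 by (simp add: card_I_set_Gm) presburger
  moreover have "card base_vecs = 4"
    by (simp add: base_vecs_def)
  ultimately show "t = card base_vecs + 3 * ((t - 4) div 3)"
    using t(1) by presburger
  have "(2::nat) ^ m = 2 * 2 ^ (m - 1)" "(16::nat) \<le> 2 ^ (m - 1)"
    using m power_increasing[of 4 "m - 1" "2::nat"] by (cases m; simp)+
  moreover have "3 * ((t - 4) div 3) \<le> t - 4" "(2::nat) ^ 3 = 8" by simp_all
  ultimately show "3 * ((t - 4) div 3) \<le> 2 ^ (m - 1) - 2 ^ 3"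
    using t(2) by linarith
  show "t \<le> 2 ^ m"
    using t(2) by linarith
  show "base_vecs \<subseteq> cube 3"
    by (auto simp: base_vecs_def cube_def vec3_def)
qed (use div3 base_triples_partition orthomorphism_omega3 in auto)

theorem lemma6p33:
  shows "\<exists>m0::nat. \<forall>m\<ge>m0. \<forall>t::nat.
     3 \<le> t \<and> real t \<le> real (f_val (Gm m)) / 1000
     \<and> (card (I_set (Gm m)) + 2 * t) mod 3 = 0 \<longrightarrow>
     zero_sum_partition (Gm m - {0})
       (replicate_mset (f_val (Gm m) - t) 2
        + replicate_mset ((card (I_set (Gm m)) + 2 * t) div 3) 3)"
proof (intro exI[of _ 5] allI impI)
  fix m t :: nat
  assume m: "5 \<le> m" and h: "3 \<le> t \<and> real t \<le> real (f_val (Gm m)) / 1000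
     \<and> (card (I_set (Gm m)) + 2 * t) mod 3 = 0"
  then have "real (1000 * t) \<le> real (2 ^ m)"
    by (simp add: f_val_Gm)
  then have "1000 * t \<le> 2 ^ m"
    by (simp only: of_nat_le_iff)
  then show "zero_sum_partition (Gm m - {0})
       (replicate_mset (f_val (Gm m) - t) 2
        + replicate_mset ((card (I_set (Gm m)) + 2 * t) div 3) 3)"
    using h m zero_sum_partition_Gm_odd zero_sum_partition_Gm_even by (cases "even m") auto
qed

end
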